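(* Each $L_{W}^{\pm}(a,\lambda)$ is an entire function of $\lambda$ and satisfies the differential equation \[ \frac{\partial^2 L_{W}^{\pm}(a,\lambda) }{\partial \lambda^2}=4\left(a-\lambda^2\right)L_{W}^{\pm}(a,\lambda) \pm 4W'(a,0)+4\lambda W(a,0). \]
   Context: $a$ is real; $W(a,\pm t)$ are the Weber parabolic cylinder functions (DLMF Sect. 12.14), solutions of $y''+(\tfrac14 t^2-a)y=0$. $L_{W}^{\pm}(a,\lambda)=\int_{0}^{\infty} e^{-\lambda t} W(a,\pm t)dt$ for $|\arg\lambda|\le\tfrac12\pi$, and by analytic continuation for other values of $\arg\lambda$. *)

theory Defs
  imports "HOL-Complex_Analysis.Complex_Analysis"
begin

text \<open>Initial values of Weber's parabolic cylinder function (DLMF 12.14.3).\<close>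
definition W0 :: "real \<Rightarrow> real" where
  "W0 a = 2 powr (-3/4) *
     sqrt (cmod (Gamma (1/4 + \<i> * of_real a / 2) / Gamma (3/4 + \<i> * of_real a / 2)))"

definition W1 :: "real \<Rightarrow> real" where
  "W1 a = - (2 powr (-1/4) *
     sqrt (cmod (Gamma (3/4 + \<i> * of_real a / 2) / Gamma (1/4 + \<i> * of_real a / 2))))"

definition weber_ode :: "real \<Rightarrow> (real \<Rightarrow> real) \<Rightarrow> bool" where
  "weber_ode a f \<longleftrightarrow> (\<exists>f'. \<forall>x. (f has_real_derivative f' x) (at x) \<and>
       (f' has_real_derivative ((a - x\<^sup>2 / 4) * f x)) (at x))"

definition W :: "real \<Rightarrow> real \<Rightarrow> real" where
  "W a = (THE f. weber_ode a f \<and> f 0 = W0 a \<and> deriv f 0 = W1 a)"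

end

theory Submission
  imports Defs
begin

text \<open>
  A solution \<open>u\<close> of the Weber equation \<open>u'' = (a - t\<^sup>2/4) u\<close> has polynomial growth on \<open>[0, \<infinity>)\<close>:
  for \<open>t\<^sup>2 > 4a\<close> the energy \<open>u'\<^sup>2 + (t\<^sup>2/4 - a) u\<^sup>2\<close>, divided by \<open>t\<^sup>2 - 4a\<close>, is decreasing, so \<open>u\<close> stays
  bounded and \<open>u'\<close> grows at most linearly. Hence its Laplace transform \<open>L\<close> is holomorphic for
  \<open>Re z > 0\<close>, with \<open>L''\<close> the transform of \<open>t\<^sup>2 u\<close>; integrating by parts twice gives the transform
  \<open>z\<^sup>2 L - z u(0) - u'(0)\<close> of \<open>u''\<close>, and comparing both with the equation yields
  \<open>L'' = 4 (a - z\<^sup>2) L + 4 u'(0) + 4 z u(0)\<close> on the half-plane. An ODE with polynomial coefficients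
  has entire solutions (its power series coefficients decay factorially); the one with the initial
  data of \<open>L\<close> at \<open>z = 1\<close> coincides with \<open>L\<close> on the half-plane by the identity theorem, and is the
  required continuation. The same power series, restricted to the real line, together with
  Gronwall's inequality shows that the initial value problem defining \<open>W(a, \<cdot>)\<close> is well posed;
  \<open>W(a, -t)\<close> is again a solution of the Weber equation.
\<close>

lemma sums_shift_powser:
  fixes z :: "'a::real_normed_field"
  assumes "(\<lambda>n. c n * z ^ n) sums S"
  shows "(\<lambda>n. (if n = 0 then 0 else c (n - 1)) * z ^ n) sums (z * S)"
proof -
  have "(\<lambda>n. z * (c n * z ^ n)) sums (z * S)"
    by (rule sums_mult[OF assms])
  then have "(\<lambda>n. (\<lambda>n. (if n = 0 then 0 else c (n - 1)) * z ^ n) (Suc n)) sums (z * S)"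
    by (simp add: ac_simps)
  then show ?thesis
    using sums_Suc_iff[of "\<lambda>n. (if n = 0 then 0 else c (n - 1)) * z ^ n"] by simp
qed

context
  fixes p0 p1 p2 q0 q1 y0 y1 :: complex
begin

text \<open>Taylor coefficients at \<open>0\<close> of the solution of \<open>f'' = (p0 + p1 z + p2 z\<^sup>2) f + q0 + q1 z\<close> with
  \<open>f(0) = y0\<close>, \<open>f'(0) = y1\<close>, obtained by comparing coefficients of \<open>z\<^sup>n\<close>.\<close>

fun ode_coeff :: "nat \<Rightarrow> complex" where
  "ode_coeff 0 = y0"
| "ode_coeff (Suc 0) = y1"
| "ode_coeff (Suc (Suc n)) = (p0 * ode_coeff n + p1 * (if n = 0 then 0 else ode_coeff (n - 1))
     + p2 * (if n < 2 then 0 else ode_coeff (n - 2))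
     + (if n = 0 then q0 else if n = 1 then q1 else 0)) / of_nat ((n + 2) * (n + 1))"

lemma ode_coeff_step_bound:
  assumes "s > 0" and "m \<ge> 2"
  shows "norm (ode_coeff (m + 2)) * s ^ (m + 2) \<le>
    (norm p0 * s^2 * (norm (ode_coeff m) * s ^ m)
     + norm p1 * s^3 * (norm (ode_coeff (m - 1)) * s ^ (m - 1))
     + norm p2 * s^4 * (norm (ode_coeff (m - 2)) * s ^ (m - 2))) / real ((m + 2) * (m + 1))"
proof -
  have pow: "s ^ (m + 2) = s^2 * s ^ m" "s ^ (m + 2) = s^3 * s ^ (m - 1)"
      "s ^ (m + 2) = s^4 * s ^ (m - 2)"
    using \<open>m \<ge> 2\<close> by (simp_all flip: power_add)
  have "ode_coeff (m + 2) = (p0 * ode_coeff m + p1 * ode_coeff (m - 1) + p2 * ode_coeff (m - 2))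
      / of_nat ((m + 2) * (m + 1))"
    using \<open>m \<ge> 2\<close> by (simp del: of_nat_mult)
  then have "norm (ode_coeff (m + 2)) * s ^ (m + 2) =
      norm (p0 * ode_coeff m + p1 * ode_coeff (m - 1) + p2 * ode_coeff (m - 2)) * s ^ (m + 2)
      / real ((m + 2) * (m + 1))"
    by (simp only: norm_divide norm_of_nat times_divide_eq_left)
  also have "\<dots> \<le> (norm p0 * norm (ode_coeff m) + norm p1 * norm (ode_coeff (m - 1))
      + norm p2 * norm (ode_coeff (m - 2))) * s ^ (m + 2) / real ((m + 2) * (m + 1))"
    using \<open>s > 0\<close>
    by (intro divide_right_mono mult_right_mono) (auto simp: norm_mult intro!: norm_triangle_le)
  also have "\<dots> = (norm p0 * s^2 * (norm (ode_coeff m) * s ^ m)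
     + norm p1 * s^3 * (norm (ode_coeff (m - 1)) * s ^ (m - 1))
     + norm p2 * s^4 * (norm (ode_coeff (m - 2)) * s ^ (m - 2))) / real ((m + 2) * (m + 1))"
  proof -
    have "norm p0 * norm (ode_coeff m) * s ^ (m + 2) = norm p0 * s^2 * (norm (ode_coeff m) * s ^ m)"
      by (subst pow(1)) (simp only: mult_ac)
    moreover have "norm p1 * norm (ode_coeff (m - 1)) * s ^ (m + 2)
        = norm p1 * s^3 * (norm (ode_coeff (m - 1)) * s ^ (m - 1))"
      by (subst pow(2)) (simp only: mult_ac)
    moreover have "norm p2 * norm (ode_coeff (m - 2)) * s ^ (m + 2)
        = norm p2 * s^4 * (norm (ode_coeff (m - 2)) * s ^ (m - 2))"
      by (subst pow(3)) (simp only: mult_ac)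
    ultimately show ?thesis
      by (simp only: distrib_right)
  qed
  finally show ?thesis .
qed

lemma ode_coeff_bound:
  assumes "s > 0"
  obtains M where "\<And>n. norm (ode_coeff n) * s ^ n \<le> M"
proof -
  define Q where "Q = norm p0 * s^2 + norm p1 * s^3 + norm p2 * s^4"
  define N where "N = nat \<lceil>Q\<rceil> + 2"
  define M where "M = Max ((\<lambda>k. norm (ode_coeff k) * s ^ k) ` {..N + 1})"
  have M_ge: "norm (ode_coeff k) * s ^ k \<le> M" if "k \<le> N + 1" for k
    unfolding M_def by (rule Max_ge) (use that in auto)
  have "0 \<le> M"
    using M_ge[of 0] by (simp add: order_trans[OF norm_ge_zero])
  \<comment> \<open>Past \<open>N\<close> the denominator \<open>(m + 2)(m + 1)\<close> outweighs \<open>Q\<close>, so the recursion keeps the bound \<open>M\<close>.\<close>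
  have "norm (ode_coeff n) * s ^ n \<le> M" for n
  proof (induction n rule: less_induct)
    case (less n)
    show ?case
    proof (cases "n \<le> N + 1")
      case False
      define m where "m = n - 2"
      have n: "n = m + 2" and "m \<ge> N" and "m \<ge> 2"
        using False by (auto simp: m_def N_def)
      have IH: "norm (ode_coeff k) * s ^ k \<le> M" if "k \<le> m" for k
        using less that n by simp
      have "norm (ode_coeff n) * s ^ n \<le> (norm p0 * s^2 * M + norm p1 * s^3 * M + norm p2 * s^4 * M)
          / real ((m + 2) * (m + 1))"
        unfolding n using IH[of m] IH[of "m - 1"] IH[of "m - 2"] \<open>s > 0\<close> \<open>m \<ge> 2\<close>
        by (intro order_trans[OF ode_coeff_step_bound] divide_right_mono add_mono mult_left_mono) auto
      also have "\<dots> = Q * M / real ((m + 2) * (m + 1))"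
        by (simp add: Q_def algebra_simps)
      also have "\<dots> \<le> M"
      proof -
        have "Q \<le> real m"
          using \<open>m \<ge> N\<close> real_nat_ceiling_ge[of Q] unfolding N_def by linarith
        also have "\<dots> \<le> real ((m + 2) * (m + 1))"
          by (intro of_nat_mono) simp
        finally have "Q * M \<le> real ((m + 2) * (m + 1)) * M"
          using \<open>0 \<le> M\<close> by (rule mult_right_mono)
        then show ?thesis
          by (subst pos_divide_le_eq) (simp_all only: of_nat_0_less_iff mult.commute, simp)
      qed
      finally show ?thesis .
    qed (rule M_ge)
  qed
  then show ?thesis by (rule that)
qed

lemma summable_ode_series: "summable (\<lambda>n. ode_coeff n * z ^ n)"
proof -
  have "2 * norm z + 1 > 0"
    by (simp add: add_nonneg_pos)
  then obtain M where M: "\<And>n. norm (ode_coeff n) * (2 * norm z + 1) ^ n \<le> M"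
    using ode_coeff_bound by blast
  show ?thesis
  proof (rule summable_comparison_test'[where g = "\<lambda>n. M * (1/2) ^ n" and N = 0])
    show "summable (\<lambda>n. M * (1/2::real) ^ n)"
      by (intro summable_mult summable_geometric) simp
    fix n :: nat
    have "norm (ode_coeff n * z ^ n) \<le> norm (ode_coeff n) * ((2 * norm z + 1) * (1/2)) ^ n"
      by (auto simp: norm_mult norm_power intro!: mult_left_mono power_mono)
    also have "\<dots> = norm (ode_coeff n) * (2 * norm z + 1) ^ n * (1/2) ^ n"
      by (simp only: power_mult_distrib mult.assoc)
    also have "\<dots> \<le> M * (1/2) ^ n"
      using M[of n] by (intro mult_right_mono) auto
    finally show "norm (ode_coeff n * z ^ n) \<le> M * (1/2) ^ n" .
  qed
qed

lemma diffs_diffs_ode_coeff: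
  "diffs (diffs ode_coeff) n = p0 * ode_coeff n + p1 * (if n = 0 then 0 else ode_coeff (n - 1))
     + p2 * (if n < 2 then 0 else ode_coeff (n - 2))
     + (if n = 0 then q0 else if n = 1 then q1 else 0)"
proof -
  have "of_nat ((n + 2) * (n + 1)) \<noteq> (0::complex)"
    by (simp only: of_nat_eq_0_iff) simp
  moreover have "diffs (diffs ode_coeff) n = of_nat ((n + 2) * (n + 1)) * ode_coeff (Suc (Suc n))"
    unfolding diffs_def by (simp del: ode_coeff.simps add: algebra_simps)
  ultimately show ?thesis
    by simp
qed

lemma ode_series_derivatives:
  "((\<lambda>z. \<Sum>n. ode_coeff n * z ^ n) has_field_derivative (\<Sum>n. diffs ode_coeff n * z ^ n)) (at z)"
  "((\<lambda>z. \<Sum>n. diffs ode_coeff n * z ^ n) has_field_derivative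
      (\<Sum>n. diffs (diffs ode_coeff) n * z ^ n)) (at z)"
  by (intro termdiffs_strong_converges_everywhere summable_ode_series termdiff_converges_all)+

lemma ode_series_solves_ode:
  "(\<Sum>n. diffs (diffs ode_coeff) n * z ^ n)
     = (p0 + p1 * z + p2 * z^2) * (\<Sum>n. ode_coeff n * z ^ n) + q0 + q1 * z"
proof -
  define f where "f = (\<Sum>n. ode_coeff n * z ^ n)"
  have S0: "(\<lambda>n. ode_coeff n * z ^ n) sums f"
    unfolding f_def using summable_ode_series by (rule summable_sums)
  have S1: "(\<lambda>n. (if n = 0 then 0 else ode_coeff (n - 1)) * z ^ n) sums (z * f)"
    by (rule sums_shift_powser[OF S0])
  have "(\<lambda>n. (if n = 0 then 0 else (if n - 1 = 0 then 0 else ode_coeff (n - 1 - 1))) * z ^ n)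
      sums (z * (z * f))"
    by (rule sums_shift_powser[OF S1])
  moreover have "(\<lambda>n. (if n = 0 then 0 else (if n - 1 = 0 then 0 else ode_coeff (n - 1 - 1))) * z ^ n)
      = (\<lambda>n. (if n < 2 then 0 else ode_coeff (n - 2)) * z ^ n)"
    by (rule ext) (auto simp: numeral_2_eq_2)
  ultimately have S2: "(\<lambda>n. (if n < 2 then 0 else ode_coeff (n - 2)) * z ^ n) sums (z^2 * f)"
    by (simp add: power2_eq_square mult.assoc)
  have S3: "(\<lambda>n. (if n = 0 then q0 else if n = 1 then q1 else 0) * z ^ n) sums (q0 + q1 * z)"
    using sums_finite[of "{0, 1}" "\<lambda>n. (if n = 0 then q0 else if n = 1 then q1 else 0) * z ^ n"]
    by simp
  have "(\<lambda>n. diffs (diffs ode_coeff) n * z ^ n) sums (p0 * f + p1 * (z * f) + p2 * (z^2 * f) + (q0 + q1 * z))"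
    unfolding diffs_diffs_ode_coeff distrib_right mult.assoc
    by (intro sums_add sums_mult S0 S1 S2 S3)
  then show ?thesis
    unfolding f_def[symmetric] by (simp add: sums_iff algebra_simps)
qed

end

lemma entire_quadratic_ode_solution:
  fixes p0 p1 p2 q0 q1 c y0 y1 :: complex
  obtains f where "f holomorphic_on UNIV"
    and "\<And>z. deriv (deriv f) z = (p0 + p1 * z + p2 * z^2) * f z + q0 + q1 * z"
    and "f c = y0" and "deriv f c = y1"
proof -
  \<comment> \<open>Expand the coefficients around \<open>c\<close> and solve by a power series in \<open>z - c\<close>.\<close>
  define P0 where "P0 = p0 + p1 * c + p2 * c^2"
  define P1 where "P1 = p1 + 2 * p2 * c"
  define Q0 where "Q0 = q0 + q1 * c"
  define g where "g = (\<lambda>z. \<Sum>n. ode_coeff P0 P1 p2 Q0 q1 y0 y1 n * z ^ n)"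
  define g1 where "g1 = (\<lambda>z. \<Sum>n. diffs (ode_coeff P0 P1 p2 Q0 q1 y0 y1) n * z ^ n)"
  define g2 where "g2 = (\<lambda>z. \<Sum>n. diffs (diffs (ode_coeff P0 P1 p2 Q0 q1 y0 y1)) n * z ^ n)"
  define f where "f z = g (z - c)" for z
  have shift: "((\<lambda>z. h (z - c)) has_field_derivative h' (z - c)) (at z)"
    if "\<And>y. (h has_field_derivative h' y) (at y)" for h h' z
  proof -
    have "((\<lambda>z. z - c) has_field_derivative 1) (at z)"
      by (auto intro!: derivative_eq_intros)
    then show ?thesis
      using DERIV_chain2[OF that] by fastforce
  qed
  have df: "(f has_field_derivative g1 (z - c)) (at z)" for z
    unfolding f_def[abs_def] g_def g1_def by (rule shift[OF ode_series_derivatives(1)])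
  have df1: "((\<lambda>z. g1 (z - c)) has_field_derivative g2 (z - c)) (at z)" for z
    unfolding g1_def g2_def by (rule shift[OF ode_series_derivatives(2)])
  have deriv_f: "deriv f = (\<lambda>z. g1 (z - c))"
    using df by (intro ext DERIV_imp_deriv)
  show ?thesis
  proof
    show "f holomorphic_on UNIV"
      using df by (auto simp: holomorphic_on_def field_differentiable_def)
    fix z
    have "deriv (deriv f) z = g2 (z - c)"
      unfolding deriv_f using df1 by (rule DERIV_imp_deriv)
    also have "\<dots> = (P0 + P1 * (z - c) + p2 * (z - c)^2) * f z + Q0 + q1 * (z - c)"
      unfolding g2_def f_def g_def by (rule ode_series_solves_ode)
    also have "\<dots> = (p0 + p1 * z + p2 * z^2) * f z + q0 + q1 * z"
      by (simp add: P0_def P1_def Q0_def algebra_simps power2_eq_square)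
    finally show "deriv (deriv f) z = (p0 + p1 * z + p2 * z^2) * f z + q0 + q1 * z" .
    show "f c = y0"
      using powser_zero[of "ode_coeff P0 P1 p2 Q0 q1 y0 y1"] by (simp add: f_def g_def)
    show "deriv f c = y1"
      using powser_zero[of "diffs (ode_coeff P0 P1 p2 Q0 q1 y0 y1)"] by (simp add: deriv_f g1_def diffs_def)
  qed
qed

lemma second_order_ode_reflect:
  fixes u u' q :: "real \<Rightarrow> real" and s :: real
  assumes du: "\<And>t. (u has_real_derivative u' t) (at t)"
    and du': "\<And>t. (u' has_real_derivative q t * u t) (at t)"
    and s: "s\<^sup>2 = 1"
  shows "((\<lambda>t. u (s * t)) has_real_derivative s * u' (s * t)) (at t)"
    and "((\<lambda>t. s * u' (s * t)) has_real_derivative q (s * t) * u (s * t)) (at t)"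
proof -
  have ds: "((\<lambda>t. s * t) has_real_derivative s) (at t)"
    by (auto intro!: derivative_eq_intros)
  show "((\<lambda>t. u (s * t)) has_real_derivative s * u' (s * t)) (at t)"
    using DERIV_chain2[OF du ds] by (simp add: mult.commute)
  have "((\<lambda>t. s * u' (s * t)) has_real_derivative s * (q (s * t) * u (s * t) * s)) (at t)"
    by (intro DERIV_cmult DERIV_chain2[OF du' ds])
  moreover have "s * (q (s * t) * u (s * t) * s) = s\<^sup>2 * (q (s * t) * u (s * t))"
    by (simp only: power2_eq_square mult_ac)
  ultimately show "((\<lambda>t. s * u' (s * t)) has_real_derivative q (s * t) * u (s * t)) (at t)"
    using s by simp
qed

lemma second_order_ode_zero_initial_nonneg:
  fixes u u' q :: "real \<Rightarrow> real"
  assumes du: "\<And>t. (u has_real_derivative u' t) (at t)"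
    and du': "\<And>t. (u' has_real_derivative q t * u t) (at t)"
    and q: "\<And>t. isCont q t"
    and "u 0 = 0" and "u' 0 = 0" and "x \<ge> 0"
  shows "u x = 0"
proof -
  obtain B where B: "\<And>t. 0 \<le> t \<and> t \<le> x \<longrightarrow> \<bar>1 + q t\<bar> \<le> B"
    using isCont_bounded[of 0 x "\<lambda>t. \<bar>1 + q t\<bar>"] \<open>x \<ge> 0\<close> q by (auto intro: continuous_intros)
  \<comment> \<open>Gronwall for the energy \<open>E = u\<^sup>2 + u'\<^sup>2\<close>, using \<open>\<bar>E'\<bar> = \<bar>2 u u' (1 + q)\<bar> \<le> B E\<close>.\<close>
  define E where "E t = u t * u t + u' t * u' t" for t
  define G where "G t = E t * exp (- B * t)" for t
  have "G x \<le> G 0"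
  proof (rule DERIV_nonpos_imp_nonincreasing[OF \<open>x \<ge> 0\<close>])
    fix t assume t: "0 \<le> t" "t \<le> x"
    have "(G has_real_derivative
        (2 * (u t * u' t) * (1 + q t) - B * E t) * exp (- B * t)) (at t)"
      unfolding G_def[abs_def] E_def[abs_def]
      by (auto intro!: derivative_eq_intros du du' simp: algebra_simps)
    moreover have "2 * (u t * u' t) * (1 + q t) \<le> B * E t"
    proof -
      have "2 * (u t * u' t) * (1 + q t) \<le> \<bar>2 * (u t * u' t)\<bar> * \<bar>1 + q t\<bar>"
        by (metis abs_ge_self abs_mult)
      also have "\<dots> \<le> E t * B"
        unfolding E_def using B t sum_squares_bound[of "\<bar>u t\<bar>" "\<bar>u' t\<bar>"]
        by (intro mult_mono) (auto simp: abs_mult power2_eq_square)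
      finally show ?thesis
        by (simp add: mult.commute)
    qed
    ultimately show "\<exists>y. (G has_real_derivative y) (at t) \<and> y \<le> 0"
      by (intro exI conjI) (auto intro: mult_nonpos_nonneg)
  qed
  then have "u x * u x + u' x * u' x \<le> 0"
    using \<open>u 0 = 0\<close> \<open>u' 0 = 0\<close> by (simp add: G_def E_def mult_le_0_iff)
  then show "u x = 0"
    by (simp only: sum_squares_le_zero_iff)
qed

lemma second_order_ode_zero_initial:
  fixes u u' q :: "real \<Rightarrow> real"
  assumes du: "\<And>t. (u has_real_derivative u' t) (at t)"
    and du': "\<And>t. (u' has_real_derivative q t * u t) (at t)"
    and q: "\<And>t. isCont q t"
    and "u 0 = 0" and "u' 0 = 0"
  shows "u x = 0"
proof (cases "x \<ge> 0")
  case True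
  then show ?thesis
    by (rule second_order_ode_zero_initial_nonneg[OF du du' q \<open>u 0 = 0\<close> \<open>u' 0 = 0\<close>])
next
  case False
  have "((\<lambda>t. u (- t)) has_real_derivative - u' (- t)) (at t)"
    and "((\<lambda>t. - u' (- t)) has_real_derivative q (- t) * u (- t)) (at t)" for t
    using second_order_ode_reflect[OF du du', of "- 1" t] by simp_all
  moreover have "isCont (\<lambda>t. q (- t)) t" for t
    by (rule isCont_o2[OF isCont_minus[OF continuous_ident] q])
  ultimately have "u (- (- x)) = 0"
    by (rule second_order_ode_zero_initial_nonneg) (use False \<open>u 0 = 0\<close> \<open>u' 0 = 0\<close> in auto)
  then show ?thesis
    by simp
qed

lemma weber_ode_unique:
  assumes "weber_ode a f" and "weber_ode a g" and "f 0 = g 0" and "deriv f 0 = deriv g 0"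
  shows "f = g"
proof
  fix x
  obtain f' where df: "\<And>x. (f has_real_derivative f' x) (at x)"
    and df': "\<And>x. (f' has_real_derivative (a - x\<^sup>2 / 4) * f x) (at x)"
    using \<open>weber_ode a f\<close> unfolding weber_ode_def by blast
  obtain g' where dg: "\<And>x. (g has_real_derivative g' x) (at x)"
    and dg': "\<And>x. (g' has_real_derivative (a - x\<^sup>2 / 4) * g x) (at x)"
    using \<open>weber_ode a g\<close> unfolding weber_ode_def by blast
  have "f x - g x = 0"
  proof (rule second_order_ode_zero_initial[where u = "\<lambda>t. f t - g t"])
    show "((\<lambda>t. f t - g t) has_real_derivative f' t - g' t) (at t)" for t
      by (intro DERIV_diff df dg)
    show "((\<lambda>t. f' t - g' t) has_real_derivative (a - t\<^sup>2 / 4) * (f t - g t)) (at t)" for t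
      using DERIV_diff[OF df' dg'] by (simp add: right_diff_distrib)
    show "f' 0 - g' 0 = 0"
      using \<open>deriv f 0 = deriv g 0\<close> DERIV_imp_deriv[OF df] DERIV_imp_deriv[OF dg] by simp
  qed (use \<open>f 0 = g 0\<close> in \<open>auto intro: continuous_intros\<close>)
  then show "f x = g x"
    by simp
qed

lemma weber_ode_exists:
  fixes a y0 y1 :: real
  obtains f where "weber_ode a f" and "f 0 = y0" and "deriv f 0 = y1"
proof -
  obtain h where h: "h holomorphic_on UNIV"
    and h_ode: "\<And>z. deriv (deriv h) z = (of_real a + 0 * z + (- 1/4) * z^2) * h z + 0 + 0 * z"
    and "h 0 = of_real y0" and "deriv h 0 = of_real y1"
    by (rule entire_quadratic_ode_solution[of "of_real a" 0 "- 1/4" 0 0 0 "of_real y0" "of_real y1"]) blast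
  have dh: "(h has_field_derivative deriv h z) (at z)"
    and dh': "(deriv h has_field_derivative deriv (deriv h) z) (at z)" for z
    using holomorphic_derivI[OF h open_UNIV UNIV_I]
      holomorphic_derivI[OF holomorphic_deriv[OF h open_UNIV] open_UNIV UNIV_I] by blast+
  define f where "f x = Re (h (of_real x))" for x
  have df: "(f has_real_derivative Re (deriv h (of_real x))) (at x)" for x
    unfolding f_def[abs_def] by (rule has_field_derivative_Re[OF has_vector_derivative_real_field[OF dh]])
  have "((\<lambda>x. Re (deriv h (of_real x))) has_real_derivative Re (deriv (deriv h) (of_real x))) (at x)" for x
    by (rule has_field_derivative_Re[OF has_vector_derivative_real_field[OF dh']])
  moreover have "Re (deriv (deriv h) (of_real x)) = (a - x\<^sup>2 / 4) * f x" for x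
    by (simp add: h_ode f_def)
  ultimately have "weber_ode a f"
    unfolding weber_ode_def using df by metis
  moreover have "deriv f 0 = y1"
    using DERIV_imp_deriv[OF df] \<open>deriv h 0 = of_real y1\<close> by simp
  ultimately show ?thesis
    using that \<open>h 0 = of_real y0\<close> by (simp add: f_def)
qed

lemma weber_ode_W: "weber_ode a (W a)"
proof -
  obtain f where f: "weber_ode a f" "f 0 = W0 a" "deriv f 0 = W1 a"
    by (rule weber_ode_exists)
  have "\<exists>!f. weber_ode a f \<and> f 0 = W0 a \<and> deriv f 0 = W1 a"
  proof (rule ex1I[of _ f])
    fix g assume "weber_ode a g \<and> g 0 = W0 a \<and> deriv g 0 = W1 a"
    then show "g = f"
      using f by (intro weber_ode_unique) auto
  qed (use f in auto)
  then show ?thesis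
    unfolding W_def by (rule conjunct1[OF theI'])
qed

definition polynomial_growth :: "(real \<Rightarrow> real) \<Rightarrow> bool" where
  "polynomial_growth u \<longleftrightarrow> (\<exists>C m. \<forall>t\<ge>0. \<bar>u t\<bar> \<le> C * (1 + t) ^ m)"

lemma polynomial_growthE:
  assumes "polynomial_growth u"
  obtains C m where "C \<ge> 0" and "\<And>t. t \<ge> 0 \<Longrightarrow> \<bar>u t\<bar> \<le> C * (1 + t) ^ m"
proof -
  obtain C m where C: "\<And>t. t \<ge> 0 \<Longrightarrow> \<bar>u t\<bar> \<le> C * (1 + t) ^ m"
    using assms unfolding polynomial_growth_def by blast
  have "0 \<le> C * (1 + 0) ^ m"
    using C[of 0] by linarith
  then show ?thesis
    by (intro that[OF _ C]) simp_all
qed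

lemma polynomial_growth_const: "polynomial_growth (\<lambda>t. c)"
  unfolding polynomial_growth_def by (intro exI[of _ "\<bar>c\<bar>"] exI[of _ 0]) simp

lemma polynomial_growth_ident: "polynomial_growth (\<lambda>t. t)"
  unfolding polynomial_growth_def by (intro exI[of _ 1] exI[of _ 1]) simp

lemma polynomial_growth_minus: "polynomial_growth u \<Longrightarrow> polynomial_growth (\<lambda>t. - u t)"
  unfolding polynomial_growth_def by simp

lemma polynomial_growth_add:
  assumes "polynomial_growth u" and "polynomial_growth v"
  shows "polynomial_growth (\<lambda>t. u t + v t)"
proof -
  obtain C m where "C \<ge> 0" and C: "\<And>t. t \<ge> 0 \<Longrightarrow> \<bar>u t\<bar> \<le> C * (1 + t) ^ m"
    using polynomial_growthE[OF assms(1)] by blast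
  obtain D n where "D \<ge> 0" and D: "\<And>t. t \<ge> 0 \<Longrightarrow> \<bar>v t\<bar> \<le> D * (1 + t) ^ n"
    using polynomial_growthE[OF assms(2)] by blast
  have "\<bar>u t + v t\<bar> \<le> (C + D) * (1 + t) ^ max m n" if "t \<ge> 0" for t
  proof -
    have "(1 + t) ^ m \<le> (1 + t) ^ max m n" and "(1 + t) ^ n \<le> (1 + t) ^ max m n"
      using that by (auto intro!: power_increasing)
    then show ?thesis
      using C[OF that] D[OF that] \<open>C \<ge> 0\<close> \<open>D \<ge> 0\<close>
      by (smt (verit, best) distrib_right mult_left_mono)
  qed
  then show ?thesis
    unfolding polynomial_growth_def by blast
qed

lemma polynomial_growth_mult:
  assumes "polynomial_growth u" and "polynomial_growth v"
  shows "polynomial_growth (\<lambda>t. u t * v t)"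
proof -
  obtain C m where "C \<ge> 0" and C: "\<And>t. t \<ge> 0 \<Longrightarrow> \<bar>u t\<bar> \<le> C * (1 + t) ^ m"
    using polynomial_growthE[OF assms(1)] by blast
  obtain D n where "D \<ge> 0" and D: "\<And>t. t \<ge> 0 \<Longrightarrow> \<bar>v t\<bar> \<le> D * (1 + t) ^ n"
    using polynomial_growthE[OF assms(2)] by blast
  have "\<bar>u t * v t\<bar> \<le> (C * D) * (1 + t) ^ (m + n)" if "t \<ge> 0" for t
    using mult_mono[OF C[OF that] D[OF that]] \<open>C \<ge> 0\<close> that
    by (simp add: abs_mult power_add mult_ac)
  then show ?thesis
    unfolding polynomial_growth_def by blast
qed

lemmas polynomial_growth_intros =
  polynomial_growth_const polynomial_growth_ident polynomial_growth_minus
  polynomial_growth_add polynomial_growth_mult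

lemma polynomial_growth_if_bounded_beyond:
  assumes "continuous_on {0..T} u" and "\<And>t. t \<ge> T \<Longrightarrow> \<bar>u t\<bar> \<le> C * (1 + t) ^ m"
  shows "polynomial_growth u"
proof -
  obtain B where B: "\<forall>t\<in>{0..T}. \<bar>u t\<bar> \<le> B"
    using compact_imp_bounded[OF compact_continuous_image[OF assms(1) compact_Icc]]
    unfolding bounded_iff by auto
  have "\<bar>u t\<bar> \<le> max (max B 0) C * (1 + t) ^ m" if "t \<ge> 0" for t
  proof (cases "t \<le> T")
    case True
    then have "\<bar>u t\<bar> \<le> B"
      using B that by auto
    also have "B \<le> max (max B 0) C * 1"
      by simp
    also have "\<dots> \<le> max (max B 0) C * (1 + t) ^ m"
      using that by (intro mult_left_mono one_le_power) auto
    finally show ?thesis .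
  next
    case False
    then show ?thesis
      using assms(2)[of t] that by (smt (verit) max.cobounded2 mult_right_mono zero_le_power)
  qed
  then show ?thesis
    unfolding polynomial_growth_def by blast
qed

lemma one_plus_power_le_exp:
  fixes t \<epsilon> :: real
  assumes "t \<ge> 0" and "\<epsilon> > 0"
  shows "(1 + t) ^ m \<le> max 1 (m / \<epsilon>) ^ m * exp (\<epsilon> * t)"
proof (cases "m = 0")
  case False
  have "1 + t \<le> max 1 (m / \<epsilon>) * (1 + \<epsilon> * t / m)"
  proof (cases "m / \<epsilon> \<ge> 1")
    case True
    then show ?thesis
      using \<open>\<epsilon> > 0\<close> False by (simp add: max_def field_simps)
  next
    case False
    then have "real m \<le> \<epsilon>"
      using \<open>\<epsilon> > 0\<close> by (simp add: not_le divide_less_eq)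
    then have "t * m \<le> \<epsilon> * t"
      using mult_left_mono[of "real m" \<epsilon> t] \<open>t \<ge> 0\<close> by (simp add: mult.commute)
    then have "t \<le> \<epsilon> * t / m"
      using \<open>m \<noteq> 0\<close> by (simp add: pos_le_divide_eq)
    then show ?thesis
      using False by simp
  qed
  then have "(1 + t) ^ m \<le> (max 1 (m / \<epsilon>) * (1 + \<epsilon> * t / m)) ^ m"
    using \<open>t \<ge> 0\<close> by (intro power_mono) auto
  also have "\<dots> \<le> max 1 (m / \<epsilon>) ^ m * exp (\<epsilon> * t)"
    unfolding power_mult_distrib using False assms
    by (intro mult_left_mono exp_ge_one_plus_x_over_n_power_n) (auto intro: order_trans[of _ 0])
  finally show ?thesis .
qed (use assms in simp)

lemma polynomial_growth_exp_bound:
  assumes "polynomial_growth u" and "\<epsilon> > 0"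
  obtains K where "\<And>t. t \<ge> 0 \<Longrightarrow> \<bar>u t\<bar> \<le> K * exp (\<epsilon> * t)"
proof -
  obtain C m where "C \<ge> 0" and C: "\<And>t. t \<ge> 0 \<Longrightarrow> \<bar>u t\<bar> \<le> C * (1 + t) ^ m"
    using polynomial_growthE[OF assms(1)] by blast
  have "\<bar>u t\<bar> \<le> (C * max 1 (m / \<epsilon>) ^ m) * exp (\<epsilon> * t)" if "t \<ge> 0" for t
    using order_trans[OF C[OF that] mult_left_mono[OF one_plus_power_le_exp[OF that assms(2)] \<open>C \<ge> 0\<close>]]
    by (simp add: mult.assoc)
  then show ?thesis
    using that by blast
qed

lemma weber_energy_ratio_antimono:
  fixes u u' :: "real \<Rightarrow> real"
  assumes du: "\<And>t. (u has_real_derivative u' t) (at t)"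
    and du': "\<And>t. (u' has_real_derivative (a - t\<^sup>2 / 4) * u t) (at t)"
    and "0 \<le> T" and "4 * a < T\<^sup>2" and "T \<le> t"
  shows "(u' t ^ 2 + (t\<^sup>2 / 4 - a) * u t ^ 2) / (t\<^sup>2 - 4 * a)
    \<le> (u' T ^ 2 + (T\<^sup>2 / 4 - a) * u T ^ 2) / (T\<^sup>2 - 4 * a)"
proof (rule DERIV_nonpos_imp_nonincreasing[OF \<open>T \<le> t\<close>])
  fix s assume "T \<le> s" "s \<le> t"
  define N where "N s = u' s ^ 2 + (s\<^sup>2 / 4 - a) * u s ^ 2" for s
  define D where "D s = s\<^sup>2 - 4 * a" for s
  have "T\<^sup>2 \<le> s\<^sup>2"
    using \<open>0 \<le> T\<close> \<open>T \<le> s\<close> by (intro power_mono) auto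
  then have "D s > 0"
    using \<open>4 * a < T\<^sup>2\<close> by (simp add: D_def)
  have dN: "(N has_real_derivative s / 2 * u s ^ 2) (at s)"
    unfolding N_def[abs_def]
    by (auto intro!: derivative_eq_intros du du' simp: algebra_simps power2_eq_square)
  have dD: "(D has_real_derivative 2 * s) (at s)"
    unfolding D_def[abs_def] by (auto intro!: derivative_eq_intros)
  have "((\<lambda>s. N s / D s) has_real_derivative
      (s / 2 * u s ^ 2 * D s - N s * (2 * s)) / (D s * D s)) (at s)"
    using \<open>D s > 0\<close> by (intro DERIV_divide dN dD) simp
  moreover have "s / 2 * u s ^ 2 * D s - N s * (2 * s) = - 2 * s * u' s ^ 2"
    by (simp add: N_def D_def field_simps power2_eq_square)
  moreover have "- 2 * s * u' s ^ 2 \<le> 0"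
    using \<open>0 \<le> T\<close> \<open>T \<le> s\<close> by simp
  ultimately show "\<exists>y. ((\<lambda>s. (u' s ^ 2 + (s\<^sup>2 / 4 - a) * u s ^ 2) / (s\<^sup>2 - 4 * a))
      has_real_derivative y) (at s) \<and> y \<le> 0"
    unfolding N_def D_def by (intro exI conjI) (auto simp: divide_nonpos_pos)
qed

lemma abs_le_one_plus_square: "\<bar>x :: real\<bar> \<le> 1 + x\<^sup>2"
  using sum_squares_bound[of "\<bar>x\<bar>" 1] by simp

lemma weber_energy_bound:
  fixes u u' :: "real \<Rightarrow> real"
  assumes du: "\<And>t. (u has_real_derivative u' t) (at t)"
    and du': "\<And>t. (u' has_real_derivative (a - t\<^sup>2 / 4) * u t) (at t)"
  obtains T K where "0 \<le> T" and "0 \<le> K" and "\<And>t. T \<le> t \<Longrightarrow> 4 \<le> t\<^sup>2 - 4 * a"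
    and "\<And>t. T \<le> t \<Longrightarrow> u' t ^ 2 + (t\<^sup>2 / 4 - a) * u t ^ 2 \<le> K * (t\<^sup>2 - 4 * a)"
proof -
  define T where "T = 2 * sqrt (\<bar>a\<bar> + 1)"
  have "0 \<le> T" and "T\<^sup>2 = 4 * \<bar>a\<bar> + 4"
    by (simp_all add: T_def power_mult_distrib)
  then have large: "4 \<le> t\<^sup>2 - 4 * a" if "T \<le> t" for t
    using power_mono[OF that \<open>0 \<le> T\<close>, of 2] abs_ge_self[of a] by linarith
  define K where "K = (u' T ^ 2 + (T\<^sup>2 / 4 - a) * u T ^ 2) / (T\<^sup>2 - 4 * a)"
  have "K \<ge> 0"
    unfolding K_def using large[of T] by (intro divide_nonneg_pos add_nonneg_nonneg mult_nonneg_nonneg) auto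
  have "u' t ^ 2 + (t\<^sup>2 / 4 - a) * u t ^ 2 \<le> K * (t\<^sup>2 - 4 * a)" if "T \<le> t" for t
    using weber_energy_ratio_antimono[OF du du' \<open>0 \<le> T\<close> _ that] large[OF that] large[of T]
    unfolding K_def by (simp add: pos_divide_le_eq)
  with \<open>0 \<le> T\<close> \<open>K \<ge> 0\<close> large show ?thesis
    by (rule that)
qed

lemma weber_solution_polynomial_growth:
  fixes u u' :: "real \<Rightarrow> real"
  assumes du: "\<And>t. (u has_real_derivative u' t) (at t)"
    and du': "\<And>t. (u' has_real_derivative (a - t\<^sup>2 / 4) * u t) (at t)"
  shows "polynomial_growth u" and "polynomial_growth u'"
proof -
  obtain T K where "0 \<le> T" and "0 \<le> K" and large: "\<And>t. T \<le> t \<Longrightarrow> 4 \<le> t\<^sup>2 - 4 * a"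
    and energy: "\<And>t. T \<le> t \<Longrightarrow> u' t ^ 2 + (t\<^sup>2 / 4 - a) * u t ^ 2 \<le> K * (t\<^sup>2 - 4 * a)"
    using weber_energy_bound[OF du du'] by blast
  have "\<bar>u t\<bar> \<le> (1 + 4 * K) * (1 + t) ^ 0" if "T \<le> t" for t
  proof -
    have "(t\<^sup>2 / 4 - a) * u t ^ 2 \<le> K * (t\<^sup>2 - 4 * a)"
      using energy[OF that] zero_le_power2[of "u' t"] by linarith
    then have "(t\<^sup>2 - 4 * a) * u t ^ 2 \<le> (t\<^sup>2 - 4 * a) * (4 * K)"
      by (simp add: algebra_simps)
    then have "u t ^ 2 \<le> 4 * K"
      using large[OF that] by simp
    then show ?thesis
      using abs_le_one_plus_square[of "u t"] by simp
  qed
  moreover have "\<bar>u' t\<bar> \<le> (1 + K * (1 + 4 * \<bar>a\<bar>)) * (1 + t) ^ 2" if "T \<le> t" for t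
  proof -
    have "0 \<le> (t\<^sup>2 / 4 - a) * u t ^ 2"
      using large[OF that] by (intro mult_nonneg_nonneg) auto
    then have "u' t ^ 2 \<le> K * (t\<^sup>2 - 4 * a)"
      using energy[OF that] by linarith
    also have "\<dots> \<le> K * ((1 + 4 * \<bar>a\<bar>) * (1 + t) ^ 2)"
    proof (rule mult_left_mono[OF _ \<open>0 \<le> K\<close>])
      have "1 \<le> (1 + t) ^ 2" and "t\<^sup>2 \<le> (1 + t) ^ 2"
        using \<open>0 \<le> T\<close> that by (auto intro!: one_le_power power_mono)
      then show "t\<^sup>2 - 4 * a \<le> (1 + 4 * \<bar>a\<bar>) * (1 + t) ^ 2"
        using mult_left_mono[of 1 "(1 + t) ^ 2" "4 * \<bar>a\<bar>"] abs_ge_self[of a]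
        by (simp add: distrib_right)
    qed
    finally have "\<bar>u' t\<bar> \<le> 1 + K * (1 + 4 * \<bar>a\<bar>) * (1 + t) ^ 2"
      using abs_le_one_plus_square[of "u' t"] by (simp add: mult.assoc)
    also have "\<dots> \<le> (1 + K * (1 + 4 * \<bar>a\<bar>)) * (1 + t) ^ 2"
      using \<open>0 \<le> T\<close> that by (simp add: algebra_simps)
    finally show ?thesis .
  qed
  moreover have "continuous_on {0..T} u" and "continuous_on {0..T} u'"
    using DERIV_isCont[OF du] DERIV_isCont[OF du'] by (auto intro: continuous_at_imp_continuous_on)
  ultimately show "polynomial_growth u" and "polynomial_growth u'"
    by (meson polynomial_growth_if_bounded_beyond)+
qed

lemma exp_dominated_integral_Ici:
  fixes g :: "real \<Rightarrow> 'a::euclidean_space"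
  assumes "continuous_on {0..} g" and "\<mu> > 0"
    and bound: "\<And>t. t \<ge> 0 \<Longrightarrow> norm (g t) \<le> M * exp (- \<mu> * t)"
  shows "g integrable_on {0..}"
    and "\<And>b. b \<ge> 0 \<Longrightarrow> norm (integral {0..} g - integral {0..b} g) \<le> M * exp (- \<mu> * b) / \<mu>"
proof -
  have majorant: "((\<lambda>t. M * exp (- \<mu> * t)) has_integral M * (exp (- \<mu> * c) / \<mu>)) {c..}" for c
    by (rule has_integral_mult_right[OF has_integral_exp_minus_to_infinity[OF \<open>\<mu> > 0\<close>]])
  have integrable: "g integrable_on {c..}" if "c \<ge> 0" for c
  proof (rule measurable_bounded_by_integrable_imp_integrable)
    show "g \<in> borel_measurable (lebesgue_on {c..})"
      using that by (intro continuous_imp_measurable_on_sets_lebesgue continuous_on_subset[OF assms(1)]) auto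
  qed (use majorant bound that in auto)
  show "g integrable_on {0..}"
    by (rule integrable) simp
  fix b :: real assume "b \<ge> 0"
  have "{0..} = {0..b} \<union> {b..}"
    using \<open>b \<ge> 0\<close> by auto
  then have "integral {0..} g = integral ({0..b} \<union> {b..}) g"
    by simp
  also have "\<dots> = integral {0..b} g + integral {b..} g"
    using \<open>b \<ge> 0\<close> continuous_on_subset[OF assms(1)]
    by (intro integral_Un integrable integrable_continuous_real) auto
  finally have "norm (integral {0..} g - integral {0..b} g) = norm (integral {b..} g)"
    by simp
  also have "\<dots> \<le> integral {b..} (\<lambda>t. M * exp (- \<mu> * t))"
    using majorant bound \<open>b \<ge> 0\<close> by (intro integral_norm_bound_integral integrable) auto
  also have "\<dots> = M * exp (- \<mu> * b) / \<mu>"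
    using integral_unique[OF majorant] by simp
  finally show "norm (integral {0..} g - integral {0..b} g) \<le> M * exp (- \<mu> * b) / \<mu>" .
qed

lemma exp_neg_mult_tendsto_zero: "c > 0 \<Longrightarrow> ((\<lambda>b. exp (- c * b)) \<longlongrightarrow> (0::real)) at_top"
  by (intro filterlim_compose[OF exp_at_bot] filterlim_tendsto_neg_mult_at_bot[OF tendsto_const]
      filterlim_ident) simp

text \<open>Where the integrand is not integrable, \<^const>\<open>integral\<close> returns \<open>0\<close>; the transform is only
  meaningful for \<open>Re z > 0\<close>.\<close>

definition laplace :: "(real \<Rightarrow> real) \<Rightarrow> complex \<Rightarrow> complex" where
  "laplace w z = integral {0..} (\<lambda>t. exp (- z * of_real t) * of_real (w t))"

lemma laplace_integrand_bound:
  assumes "polynomial_growth w" and "\<sigma> > 0"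
  obtains M where "\<And>z t. \<sigma> \<le> Re z \<Longrightarrow> 0 \<le> t \<Longrightarrow>
    norm (exp (- z * of_real t) * of_real (w t)) \<le> M * exp (- (\<sigma> / 2) * t)"
proof -
  obtain K where K: "\<And>t. t \<ge> 0 \<Longrightarrow> \<bar>w t\<bar> \<le> K * exp (\<sigma> / 2 * t)"
    using polynomial_growth_exp_bound[OF assms(1), of "\<sigma> / 2"] \<open>\<sigma> > 0\<close> by auto
  have "norm (exp (- z * of_real t) * of_real (w t)) \<le> K * exp (- (\<sigma> / 2) * t)"
    if "\<sigma> \<le> Re z" "0 \<le> t" for z t
  proof -
    have "norm (exp (- z * of_real t) * of_real (w t)) = exp (- Re z * t) * \<bar>w t\<bar>"
      by (simp add: norm_mult norm_exp_eq_Re)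
    also have "\<dots> \<le> exp (- \<sigma> * t) * (K * exp (\<sigma> / 2 * t))"
      using that K by (intro mult_mono) (auto simp: mult_right_mono)
    also have "\<dots> = K * exp (- (\<sigma> / 2) * t)"
      by (simp add: mult_ac flip: exp_add)
    finally show ?thesis .
  qed
  then show ?thesis
    by (rule that)
qed

lemma continuous_on_laplace_integrand:
  "continuous_on {0..} w \<Longrightarrow>
    continuous_on {0..} (\<lambda>t. exp (- z * of_real t) * of_real (w t) :: complex)"
  by (intro continuous_intros)

context
  fixes w :: "real \<Rightarrow> real"
  assumes cont: "continuous_on {0..} w" and growth: "polynomial_growth w"
begin

lemma laplace_truncation_bound:
  assumes "\<sigma> > 0"
  obtains M where "\<And>z b. \<sigma> \<le> Re z \<Longrightarrow> 0 \<le> b \<Longrightarrow>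
    norm (laplace w z - integral {0..b} (\<lambda>t. exp (- z * of_real t) * of_real (w t)))
      \<le> M * exp (- (\<sigma> / 2) * b) / (\<sigma> / 2)"
proof -
  obtain M where M: "\<And>z t. \<sigma> \<le> Re z \<Longrightarrow> 0 \<le> t \<Longrightarrow>
      norm (exp (- z * of_real t) * of_real (w t)) \<le> M * exp (- (\<sigma> / 2) * t)"
    using laplace_integrand_bound[OF growth \<open>\<sigma> > 0\<close>] by blast
  have "norm (laplace w z - integral {0..b} (\<lambda>t. exp (- z * of_real t) * of_real (w t)))
      \<le> M * exp (- (\<sigma> / 2) * b) / (\<sigma> / 2)" if "\<sigma> \<le> Re z" "0 \<le> b" for z b
    unfolding laplace_def
    by (rule exp_dominated_integral_Ici(2)[OF continuous_on_laplace_integrand[OF cont]])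
      (use M that \<open>\<sigma> > 0\<close> in auto)
  then show ?thesis
    by (rule that)
qed

lemma laplace_has_integral:
  assumes "Re z > 0"
  shows "((\<lambda>t. exp (- z * of_real t) * of_real (w t)) has_integral laplace w z) {0..}"
proof -
  obtain M where M: "\<And>y t. Re z \<le> Re y \<Longrightarrow> 0 \<le> t \<Longrightarrow>
      norm (exp (- y * of_real t) * of_real (w t)) \<le> M * exp (- (Re z / 2) * t)"
    using laplace_integrand_bound[OF growth assms] by blast
  have "(\<lambda>t. exp (- z * of_real t) * of_real (w t)) integrable_on {0..}"
    using assms by (intro exp_dominated_integral_Ici(1)[OF continuous_on_laplace_integrand[OF cont] _ M]) auto
  then show ?thesis
    unfolding laplace_def by (rule integrable_integral)
qed

lemma laplace_truncation_uniform_limit: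
  assumes "\<sigma> > 0"
  shows "uniform_limit {z. \<sigma> \<le> Re z}
    (\<lambda>b z. integral {0..b} (\<lambda>t. exp (- z * of_real t) * of_real (w t))) (laplace w) at_top"
proof (rule uniform_limitI)
  fix e :: real assume "e > 0"
  obtain M where M: "\<And>z b. \<sigma> \<le> Re z \<Longrightarrow> 0 \<le> b \<Longrightarrow>
      norm (laplace w z - integral {0..b} (\<lambda>t. exp (- z * of_real t) * of_real (w t)))
        \<le> M * exp (- (\<sigma> / 2) * b) / (\<sigma> / 2)"
    using laplace_truncation_bound[OF assms] by blast
  have "((\<lambda>b. M * exp (- (\<sigma> / 2) * b) / (\<sigma> / 2)) \<longlongrightarrow> M * 0 / (\<sigma> / 2)) at_top"
    using assms by (intro tendsto_intros exp_neg_mult_tendsto_zero) auto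
  then have "\<forall>\<^sub>F b in at_top. M * exp (- (\<sigma> / 2) * b) / (\<sigma> / 2) < e"
    using \<open>e > 0\<close> by (simp add: order_tendstoD(2))
  moreover have "\<forall>\<^sub>F b in at_top. (0::real) \<le> b"
    by (rule eventually_ge_at_top)
  ultimately show "\<forall>\<^sub>F b in at_top. \<forall>z\<in>{z. \<sigma> \<le> Re z}.
      dist (integral {0..b} (\<lambda>t. exp (- z * of_real t) * of_real (w t))) (laplace w z) < e"
  proof eventually_elim
    case (elim b)
    show ?case
    proof
      fix z assume "z \<in> {z. \<sigma> \<le> Re z}"
      then have "norm (laplace w z - integral {0..b} (\<lambda>t. exp (- z * of_real t) * of_real (w t)))
          < e"
        using M[of z b] elim by auto
      then show "dist (integral {0..b} (\<lambda>t. exp (- z * of_real t) * of_real (w t))) (laplace w z) < e"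
        by (simp add: dist_norm norm_minus_commute)
    qed
  qed
qed

lemma laplace_truncation_tendsto:
  assumes "Re z > 0"
  shows "((\<lambda>b. integral {0..b} (\<lambda>t. exp (- z * of_real t) * of_real (w t))) \<longlongrightarrow> laplace w z) at_top"
  using tendsto_uniform_limitI[OF laplace_truncation_uniform_limit[of "Re z"]] assms by simp

lemma truncated_laplace_has_field_derivative:
  fixes z :: complex
  shows "((\<lambda>z. integral {0..b} (\<lambda>t. exp (- z * of_real t) * of_real (w t))) has_field_derivative
     integral {0..b} (\<lambda>t. exp (- z * of_real t) * of_real (- t * w t))) (at z)"
proof -
  have "continuous_on (UNIV \<times> {0..b}) (\<lambda>p. w (snd p))"
    by (rule continuous_on_compose2[OF cont]) (auto intro: continuous_intros)
  then have "continuous_on (UNIV \<times> cbox 0 b)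
      (\<lambda>(z, t). exp (- z * of_real t) * of_real (- t * w t) :: complex)"
    by (auto simp: case_prod_beta intro!: continuous_intros continuous_on_of_real)
  moreover have "(\<lambda>t. exp (- z * of_real t) * of_real (w t)) integrable_on cbox 0 b" for z :: complex
    using continuous_on_subset[OF continuous_on_laplace_integrand[OF cont], of "{0..b}"]
    by (intro integrable_continuous) auto
  ultimately have "((\<lambda>z. integral (cbox 0 b) (\<lambda>t. exp (- z * of_real t) * of_real (w t)))
      has_field_derivative integral (cbox 0 b) (\<lambda>t. exp (- z * of_real t) * of_real (- t * w t)))
      (at z within UNIV)"
    by (intro leibniz_rule_field_derivative) (auto intro!: derivative_eq_intros)
  then show ?thesis
    by simp
qed

end

lemma cball_subset_Re_half: "cball z (Re z / 2) \<subseteq> {y. Re z / 2 \<le> Re y}"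
proof
  fix y assume "y \<in> cball z (Re z / 2)"
  then have "Re z - Re y \<le> Re z / 2"
    using abs_Re_le_cmod[of "z - y"] abs_ge_self[of "Re (z - y)"] by (simp add: dist_norm)
  then show "y \<in> {y. Re z / 2 \<le> Re y}"
    by simp
qed

lemma laplace_has_field_derivative:
  assumes cont: "continuous_on {0..} w" and growth: "polynomial_growth w" and "Re z > 0"
  shows "(laplace w has_field_derivative laplace (\<lambda>t. - t * w t) z) (at z)"
proof -
  define r where "r = Re z / 2"
  have "r > 0"
    using \<open>Re z > 0\<close> by (simp add: r_def)
  \<comment> \<open>The truncated transforms are entire and converge uniformly near \<open>z\<close>, so their derivatives
    converge to the derivative of the limit.\<close>
  have ulim: "uniform_limit (cball z r)
      (\<lambda>b y. integral {0..b} (\<lambda>t. exp (- y * of_real t) * of_real (w t))) (laplace w) at_top"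
    unfolding r_def using \<open>Re z > 0\<close>
    by (intro uniform_limit_on_subset[OF laplace_truncation_uniform_limit[OF cont growth]
        cball_subset_Re_half]) simp
  have trunc: "\<forall>\<^sub>F b in at_top. continuous_on (cball z r)
        (\<lambda>y. integral {0..b} (\<lambda>t. exp (- y * of_real t) * of_real (w t))) \<and>
      (\<forall>y\<in>ball z r. ((\<lambda>y. integral {0..b} (\<lambda>t. exp (- y * of_real t) * of_real (w t)))
        has_field_derivative integral {0..b} (\<lambda>t. exp (- y * of_real t) * of_real (- t * w t))) (at y))"
    using truncated_laplace_has_field_derivative[OF cont growth]
    by (intro always_eventually allI conjI ballI continuous_at_imp_continuous_on DERIV_isCont) auto
  obtain g' where g': "\<And>y. y \<in> ball z r \<Longrightarrow> (laplace w has_field_derivative g' y) (at y) \<and>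
      ((\<lambda>b. integral {0..b} (\<lambda>t. exp (- y * of_real t) * of_real (- t * w t))) \<longlongrightarrow> g' y) at_top"
    using has_complex_derivative_uniform_limit[OF trunc ulim trivial_limit_at_top_linorder \<open>r > 0\<close>]
    by blast
  then have g'_z: "(laplace w has_field_derivative g' z) (at z)"
    and lim: "((\<lambda>b. integral {0..b} (\<lambda>t. exp (- z * of_real t) * of_real (- t * w t))) \<longlongrightarrow> g' z) at_top"
    using \<open>r > 0\<close> by auto
  have "continuous_on {0..} (\<lambda>t. - t * w t)" and "polynomial_growth (\<lambda>t. - t * w t)"
    using cont growth by (auto intro!: continuous_intros polynomial_growth_intros)
  from laplace_truncation_tendsto[OF this \<open>Re z > 0\<close>] lim have "g' z = laplace (\<lambda>t. - t * w t) z"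
    by (rule tendsto_unique[OF trivial_limit_at_top_linorder, rotated])
  then show ?thesis
    using g'_z by simp
qed

lemma laplace_deriv_deriv:
  assumes cont: "continuous_on {0..} w" and growth: "polynomial_growth w" and "Re z > 0"
  shows "deriv (deriv (laplace w)) z = laplace (\<lambda>t. t\<^sup>2 * w t) z"
proof -
  have cont': "continuous_on {0..} (\<lambda>t. - t * w t)" and growth': "polynomial_growth (\<lambda>t. - t * w t)"
    using cont growth by (auto intro!: continuous_intros polynomial_growth_intros)
  have "\<forall>\<^sub>F y in nhds z. y \<in> {y. Re y > 0}"
    using \<open>Re z > 0\<close> by (intro eventually_nhds_in_open open_halfspace_Re_gt) simp
  then have "\<forall>\<^sub>F y in nhds z. deriv (laplace w) y = laplace (\<lambda>t. - t * w t) y"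
    by eventually_elim (rule DERIV_imp_deriv[OF laplace_has_field_derivative[OF cont growth]], simp)
  then have "deriv (deriv (laplace w)) z = deriv (laplace (\<lambda>t. - t * w t)) z"
    by (rule deriv_cong_ev) simp
  also have "\<dots> = laplace (\<lambda>t. - t * (- t * w t)) z"
    by (rule DERIV_imp_deriv[OF laplace_has_field_derivative[OF cont' growth' \<open>Re z > 0\<close>]])
  finally show ?thesis
    by (simp add: power2_eq_square mult.assoc)
qed

lemma laplace_integrand_tendsto_zero:
  assumes "polynomial_growth w" and "Re z > 0"
  shows "((\<lambda>t. exp (- z * of_real t) * of_real (w t)) \<longlongrightarrow> 0) at_top"
proof -
  obtain M where M: "\<And>y t. Re z \<le> Re y \<Longrightarrow> 0 \<le> t \<Longrightarrow>
      norm (exp (- y * of_real t) * of_real (w t)) \<le> M * exp (- (Re z / 2) * t)"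
    using laplace_integrand_bound[OF assms] by blast
  show ?thesis
  proof (rule Lim_null_comparison)
    show "\<forall>\<^sub>F t in at_top. norm (exp (- z * of_real t) * of_real (w t)) \<le> M * exp (- (Re z / 2) * t)"
      using eventually_ge_at_top[of 0] by eventually_elim (rule M, simp_all)
    show "((\<lambda>t. M * exp (- (Re z / 2) * t)) \<longlongrightarrow> 0) at_top"
      using tendsto_mult_right_zero[OF exp_neg_mult_tendsto_zero, of "Re z / 2" M] assms by simp
  qed
qed

lemma truncated_laplace_of_second_derivative:
  fixes z :: complex
  assumes du: "\<And>t. (u has_real_derivative u' t) (at t)"
    and du': "\<And>t. (u' has_real_derivative u'' t) (at t)"
    and "continuous_on {0..} u''" and "b \<ge> 0"
  shows "integral {0..b} (\<lambda>t. exp (- z * of_real t) * of_real (u'' t))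
      - z\<^sup>2 * integral {0..b} (\<lambda>t. exp (- z * of_real t) * of_real (u t))
    = exp (- z * of_real b) * of_real (u' b) + z * (exp (- z * of_real b) * of_real (u b))
      - (of_real (u' 0) + z * of_real (u 0))"
proof -
  define e where "e t = exp (- z * of_real t)" for t
  \<comment> \<open>Both integrations by parts in one step.\<close>
  define \<phi> where "\<phi> t = e t * of_real (u' t) + z * (e t * of_real (u t))" for t
  have "(\<phi> has_vector_derivative e t * of_real (u'' t) - z\<^sup>2 * (e t * of_real (u t))) (at t)" for t
  proof -
    have "((\<lambda>y. exp (- z * y)) has_field_derivative - z * e t) (at (of_real t))"
      unfolding e_def by (auto intro!: derivative_eq_intros)
    then have de: "(e has_vector_derivative - z * e t) (at t)"
      unfolding e_def[abs_def] by (rule has_vector_derivative_real_field)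
    show ?thesis
      unfolding \<phi>_def[abs_def]
      by (rule derivative_eq_intros has_vector_derivative_of_real de du du' refl)+
        (simp add: algebra_simps power2_eq_square)
  qed
  then have "((\<lambda>t. e t * of_real (u'' t) - z\<^sup>2 * (e t * of_real (u t))) has_integral \<phi> b - \<phi> 0) {0..b}"
    using \<open>b \<ge> 0\<close> by (intro fundamental_theorem_of_calculus) (auto intro: has_vector_derivative_at_within)
  moreover have "((\<lambda>t. e t * of_real (v t)) has_integral integral {0..b} (\<lambda>t. e t * of_real (v t))) {0..b}"
    if "continuous_on {0..} v" for v
    using continuous_on_subset[OF continuous_on_laplace_integrand[OF that]]
    by (intro integrable_integral integrable_continuous_real) (auto simp: e_def)
  moreover have "continuous_on {0..} u"
    using DERIV_isCont[OF du] by (auto intro: continuous_at_imp_continuous_on)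
  ultimately have "integral {0..b} (\<lambda>t. e t * of_real (u'' t)) - z\<^sup>2 * integral {0..b} (\<lambda>t. e t * of_real (u t))
      = \<phi> b - \<phi> 0"
    using \<open>continuous_on {0..} u''\<close>
    by (intro has_integral_unique[OF has_integral_diff[OF _ has_integral_mult_right]]) blast+
  then show ?thesis
    by (simp add: \<phi>_def e_def)
qed

lemma laplace_of_second_derivative:
  assumes du: "\<And>t. (u has_real_derivative u' t) (at t)"
    and du': "\<And>t. (u' has_real_derivative u'' t) (at t)"
    and "continuous_on {0..} u''"
    and "polynomial_growth u" and "polynomial_growth u'" and "polynomial_growth u''"
    and "Re z > 0"
  shows "laplace u'' z = z\<^sup>2 * laplace u z - z * u 0 - u' 0"
proof -
  have "continuous_on {0..} u"
    using DERIV_isCont[OF du] by (auto intro: continuous_at_imp_continuous_on)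
  have "((\<lambda>b. exp (- z * of_real b) * of_real (u' b) + z * (exp (- z * of_real b) * of_real (u b))
      - (of_real (u' 0) + z * of_real (u 0))) \<longlongrightarrow> 0 - (of_real (u' 0) + z * of_real (u 0))) at_top"
    using assms by (intro tendsto_intros laplace_integrand_tendsto_zero tendsto_add_zero tendsto_mult_right_zero)
  then have "((\<lambda>b. integral {0..b} (\<lambda>t. exp (- z * of_real t) * of_real (u'' t))
      - z\<^sup>2 * integral {0..b} (\<lambda>t. exp (- z * of_real t) * of_real (u t)))
      \<longlongrightarrow> 0 - (of_real (u' 0) + z * of_real (u 0))) at_top"
    by (rule Lim_transform_eventually)
      (rule eventually_mono[OF eventually_ge_at_top[of 0]
        truncated_laplace_of_second_derivative[OF du du' assms(3), symmetric]])
  moreover have "((\<lambda>b. integral {0..b} (\<lambda>t. exp (- z * of_real t) * of_real (u'' t))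
      - z\<^sup>2 * integral {0..b} (\<lambda>t. exp (- z * of_real t) * of_real (u t)))
      \<longlongrightarrow> laplace u'' z - z\<^sup>2 * laplace u z) at_top"
    using assms \<open>continuous_on {0..} u\<close> by (intro tendsto_intros laplace_truncation_tendsto)
  ultimately have "laplace u'' z - z\<^sup>2 * laplace u z = 0 - (of_real (u' 0) + z * of_real (u 0))"
    by (rule tendsto_unique[OF trivial_limit_at_top_linorder, rotated])
  then show ?thesis
    by (simp add: algebra_simps)
qed

lemma holomorphic_on_laplace:
  assumes "continuous_on {0..} w" and "polynomial_growth w"
  shows "laplace w holomorphic_on {z. Re z > 0}"
  using laplace_has_field_derivative[OF assms]
  by (auto simp: holomorphic_on_def field_differentiable_def intro: has_field_derivative_at_within)

lemma higher_deriv_second_order_ode: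
  assumes "open S" and hd: "d holomorphic_on S" and hp: "p holomorphic_on S"
    and ode: "\<And>z. z \<in> S \<Longrightarrow> deriv (deriv d) z = p z * d z"
  shows "\<exists>\<alpha> \<beta>. \<alpha> holomorphic_on S \<and> \<beta> holomorphic_on S \<and>
    (\<forall>z\<in>S. (deriv ^^ n) d z = \<alpha> z * d z + \<beta> z * deriv d z)"
proof (induction n)
  case 0
  show ?case
    by (rule exI[of _ "\<lambda>_. 1"], rule exI[of _ "\<lambda>_. 0"]) auto
next
  case (Suc n)
  then obtain \<alpha> \<beta> where h\<alpha>: "\<alpha> holomorphic_on S" and h\<beta>: "\<beta> holomorphic_on S"
    and eq: "\<forall>z\<in>S. (deriv ^^ n) d z = \<alpha> z * d z + \<beta> z * deriv d z"
    by blast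
  have "(deriv ^^ Suc n) d z = (deriv \<alpha> z + \<beta> z * p z) * d z + (\<alpha> z + deriv \<beta> z) * deriv d z"
    if "z \<in> S" for z
  proof -
    have "\<forall>\<^sub>F y in nhds z. (deriv ^^ n) d y = \<alpha> y * d y + \<beta> y * deriv d y"
      using eventually_nhds_in_open[OF \<open>open S\<close> that] eq by (auto elim: eventually_mono)
    then have "(deriv ^^ Suc n) d z = deriv (\<lambda>y. \<alpha> y * d y + \<beta> y * deriv d y) z"
      by (simp add: deriv_cong_ev)
    also have "\<dots> = (deriv \<alpha> z + \<beta> z * p z) * d z + (\<alpha> z + deriv \<beta> z) * deriv d z"
    proof (rule DERIV_imp_deriv)
      have "(deriv d has_field_derivative p z * d z) (at z)"
        using holomorphic_derivI[OF holomorphic_deriv[OF hd \<open>open S\<close>] \<open>open S\<close> that] ode[OF that]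
        by simp
      then show "((\<lambda>y. \<alpha> y * d y + \<beta> y * deriv d y) has_field_derivative
          (deriv \<alpha> z + \<beta> z * p z) * d z + (\<alpha> z + deriv \<beta> z) * deriv d z) (at z)"
        using holomorphic_derivI[OF h\<alpha> \<open>open S\<close> that] holomorphic_derivI[OF h\<beta> \<open>open S\<close> that]
          holomorphic_derivI[OF hd \<open>open S\<close> that]
        by (auto intro!: derivative_eq_intros simp: algebra_simps)
    qed
    finally show ?thesis .
  qed
  moreover have "(\<lambda>z. deriv \<alpha> z + \<beta> z * p z) holomorphic_on S"
    and "(\<lambda>z. \<alpha> z + deriv \<beta> z) holomorphic_on S"
    using h\<alpha> h\<beta> hp \<open>open S\<close> by (auto intro!: holomorphic_intros holomorphic_deriv)
  ultimately show ?case
    by blast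
qed

lemma holomorphic_second_order_ode_unique:
  assumes S: "open S" "connected S"
    and hf: "f holomorphic_on S" and hg: "g holomorphic_on S" and hp: "p holomorphic_on S"
    and ode_f: "\<And>z. z \<in> S \<Longrightarrow> deriv (deriv f) z = p z * f z + q z"
    and ode_g: "\<And>z. z \<in> S \<Longrightarrow> deriv (deriv g) z = p z * g z + q z"
    and "c \<in> S" and "f c = g c" and "deriv f c = deriv g c" and "z \<in> S"
  shows "f z = g z"
proof -
  define d where "d z = f z - g z" for z
  have hd: "d holomorphic_on S"
    unfolding d_def[abs_def] using hf hg by (rule holomorphic_on_diff)
  have deriv_d: "(deriv ^^ n) d z = (deriv ^^ n) f z - (deriv ^^ n) g z" if "z \<in> S" for n z
    unfolding d_def[abs_def] using hf hg S(1) that by (rule higher_deriv_diff)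
  have "deriv (deriv d) z = p z * d z" if "z \<in> S" for z
    using deriv_d[OF that, of 2] ode_f[OF that] ode_g[OF that]
    by (simp add: numeral_2_eq_2 d_def algebra_simps)
  note higher = higher_deriv_second_order_ode[OF S(1) hd hp this]
  have "d c = 0" and "deriv d c = 0"
    using \<open>f c = g c\<close> \<open>deriv f c = deriv g c\<close> deriv_d[OF \<open>c \<in> S\<close>, of 1] by (simp_all add: d_def)
  then have "(deriv ^^ n) d c = 0" for n
    using higher[of n] \<open>c \<in> S\<close> by auto
  then have "d z = 0"
    by (rule holomorphic_fun_eq_0_on_connected[OF hd S _ \<open>c \<in> S\<close> \<open>z \<in> S\<close>])
  then show ?thesis
    by (simp add: d_def)
qed

lemma laplace_weber_potential:
  assumes "continuous_on {0..} u" and "polynomial_growth u" and "Re z > 0"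
  shows "laplace (\<lambda>t. (a - t\<^sup>2 / 4) * u t) z
    = of_real a * laplace u z - laplace (\<lambda>t. t\<^sup>2 * u t) z / 4"
proof -
  have "polynomial_growth (\<lambda>t. t * t * u t)"
    using assms(2) by (intro polynomial_growth_intros)
  then have "((\<lambda>t. of_real a * (exp (- z * of_real t) * of_real (u t))
        - exp (- z * of_real t) * of_real (t\<^sup>2 * u t) / 4)
      has_integral of_real a * laplace u z - laplace (\<lambda>t. t\<^sup>2 * u t) z / 4) {0..}"
    using assms by (intro has_integral_diff has_integral_mult_right has_integral_divide
        laplace_has_integral continuous_intros) (simp_all add: power2_eq_square)
  moreover have "(\<lambda>t. exp (- z * of_real t) * of_real ((a - t\<^sup>2 / 4) * u t))
      = (\<lambda>t. of_real a * (exp (- z * of_real t) * of_real (u t))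
        - exp (- z * of_real t) * of_real (t\<^sup>2 * u t) / 4)"
    by (rule ext) (simp add: field_simps)
  ultimately show ?thesis
    unfolding laplace_def[of "\<lambda>t. (a - t\<^sup>2 / 4) * u t"] by (simp add: integral_unique)
qed

lemma laplace_weber_ode:
  fixes u u' :: "real \<Rightarrow> real"
  assumes du: "\<And>t. (u has_real_derivative u' t) (at t)"
    and du': "\<And>t. (u' has_real_derivative (a - t\<^sup>2 / 4) * u t) (at t)"
    and "Re z > 0"
  shows "deriv (deriv (laplace u)) z
    = 4 * (of_real a - z\<^sup>2) * laplace u z + 4 * of_real (u' 0) + 4 * z * of_real (u 0)"
proof -
  have growth: "polynomial_growth u" "polynomial_growth u'"
    by (rule weber_solution_polynomial_growth[OF du du'])+
  have cont: "continuous_on {0..} u"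
    using DERIV_isCont[OF du] by (auto intro: continuous_at_imp_continuous_on)
  have "polynomial_growth (\<lambda>t. (a + - (1/4 * (t * t))) * u t)"
    using growth(1) by (intro polynomial_growth_intros)
  then have "polynomial_growth (\<lambda>t. (a - t\<^sup>2 / 4) * u t)"
    by (simp add: power2_eq_square)
  then have "laplace (\<lambda>t. (a - t\<^sup>2 / 4) * u t) z = z\<^sup>2 * laplace u z - z * u 0 - u' 0"
    using growth \<open>Re z > 0\<close>
    by (intro laplace_of_second_derivative[OF du du'] continuous_intros cont) auto
  then have "laplace (\<lambda>t. t\<^sup>2 * u t) z = 4 * (of_real a * laplace u z - (z\<^sup>2 * laplace u z - z * u 0 - u' 0))"
    unfolding laplace_weber_potential[OF cont growth(1) \<open>Re z > 0\<close>] by (simp add: field_simps)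
  then show ?thesis
    unfolding laplace_deriv_deriv[OF cont growth(1) \<open>Re z > 0\<close>] by (simp add: algebra_simps)
qed

lemma laplace_weber_entire_extension:
  fixes u u' :: "real \<Rightarrow> real"
  assumes du: "\<And>t. (u has_real_derivative u' t) (at t)"
    and du': "\<And>t. (u' has_real_derivative (a - t\<^sup>2 / 4) * u t) (at t)"
  obtains L where "L holomorphic_on UNIV"
    and "\<And>z. Re z > 0 \<Longrightarrow> ((\<lambda>t. exp (- z * of_real t) * of_real (u t)) has_integral L z) {0..}"
    and "\<And>z. deriv (deriv L) z = 4 * (of_real a - z\<^sup>2) * L z + 4 * of_real (u' 0) + 4 * z * of_real (u 0)"
proof -
  define q where "q z = 4 * of_real (u' 0) + 4 * z * of_real (u 0)" for z :: complex
  obtain L where "L holomorphic_on UNIV"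
    and ode: "\<And>z. deriv (deriv L) z = (4 * of_real a + 0 * z + (- 4) * z\<^sup>2) * L z
      + 4 * of_real (u' 0) + 4 * of_real (u 0) * z"
    and "L 1 = laplace u 1" and "deriv L 1 = deriv (laplace u) 1"
    by (rule entire_quadratic_ode_solution[of "4 * of_real a" 0 "- 4" "4 * of_real (u' 0)"
          "4 * of_real (u 0)" 1 "laplace u 1" "deriv (laplace u) 1"]) blast
  have ode_L: "deriv (deriv L) z = 4 * (of_real a - z\<^sup>2) * L z + q z" for z
    unfolding ode q_def by (simp add: algebra_simps)
  have "continuous_on {0..} u" and "polynomial_growth u"
    using DERIV_isCont[OF du] weber_solution_polynomial_growth[OF du du']
    by (auto intro: continuous_at_imp_continuous_on)
  define H where "H = {z. Re z > 0}"
  have "open H" and "connected H" and "1 \<in> H"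
    unfolding H_def by (auto intro: open_halfspace_Re_gt convex_connected convex_halfspace_Re_gt)
  have "L holomorphic_on H"
    using \<open>L holomorphic_on UNIV\<close> by (rule holomorphic_on_subset) simp
  moreover have "laplace u holomorphic_on H"
    unfolding H_def by (rule holomorphic_on_laplace) fact+
  moreover have "(\<lambda>z. 4 * (of_real a - z\<^sup>2)) holomorphic_on H"
    by (intro holomorphic_intros)
  moreover have "deriv (deriv L) z = 4 * (of_real a - z\<^sup>2) * L z + q z" if "z \<in> H" for z
    by (rule ode_L)
  moreover have "deriv (deriv (laplace u)) z = 4 * (of_real a - z\<^sup>2) * laplace u z + q z" if "z \<in> H" for z
    using laplace_weber_ode[OF du du'] that by (simp add: H_def q_def add.assoc)
  ultimately have L_eq: "L z = laplace u z" if "z \<in> H" for z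
    using holomorphic_second_order_ode_unique[OF \<open>open H\<close> \<open>connected H\<close>] \<open>1 \<in> H\<close>
      \<open>L 1 = laplace u 1\<close> \<open>deriv L 1 = deriv (laplace u) 1\<close> that
    by blast
  show ?thesis
  proof (rule that[OF \<open>L holomorphic_on UNIV\<close>])
    show "((\<lambda>t. exp (- z * of_real t) * of_real (u t)) has_integral L z) {0..}" if "Re z > 0" for z
      using laplace_has_integral[OF \<open>continuous_on {0..} u\<close> \<open>polynomial_growth u\<close> that] L_eq that
      by (simp add: H_def)
    show "deriv (deriv L) z = 4 * (of_real a - z\<^sup>2) * L z + 4 * of_real (u' 0) + 4 * z * of_real (u 0)" for z
      using ode_L[of z] by (simp add: q_def add.assoc)
  qed
qed

theorem lemma4p2:
  fixes a :: real and s :: real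
  assumes "s = 1 \<or> s = -1"
  shows "\<exists>L :: complex \<Rightarrow> complex.
     L holomorphic_on UNIV \<and>
     (\<forall>z. Re z > 0 \<longrightarrow>
        ((\<lambda>t. exp (- z * of_real t) * of_real (W a (s * t))) has_integral L z) {0..}) \<and>
     (\<forall>z. deriv (deriv L) z =
        4 * (of_real a - z\<^sup>2) * L z + of_real s * 4 * of_real (deriv (W a) 0)
        + 4 * z * of_real (W a 0))"
proof -
  obtain W' where dW: "\<And>x. (W a has_real_derivative W' x) (at x)"
    and dW': "\<And>x. (W' has_real_derivative (a - x\<^sup>2 / 4) * W a x) (at x)"
    using weber_ode_W unfolding weber_ode_def by blast
  define w where "w t = W a (s * t)" for t
  define w' where "w' t = s * W' (s * t)" for t
  have "s\<^sup>2 = 1"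
    using assms by auto
  then have dw: "(w has_real_derivative w' t) (at t)"
    and dw': "(w' has_real_derivative (a - t\<^sup>2 / 4) * w t) (at t)" for t
    using second_order_ode_reflect[OF dW dW' \<open>s\<^sup>2 = 1\<close>, of t]
    by (simp_all add: w_def[abs_def] w'_def[abs_def] power_mult_distrib)
  obtain L where "L holomorphic_on UNIV"
    and "\<And>z. Re z > 0 \<Longrightarrow> ((\<lambda>t. exp (- z * of_real t) * of_real (w t)) has_integral L z) {0..}"
    and "\<And>z. deriv (deriv L) z = 4 * (of_real a - z\<^sup>2) * L z + 4 * of_real (w' 0) + 4 * z * of_real (w 0)"
    by (rule laplace_weber_entire_extension[OF dw dw']) blast
  moreover have "deriv (W a) 0 = W' 0"
    by (rule DERIV_imp_deriv[OF dW])
  ultimately show ?thesis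
    unfolding w_def w'_def by (intro exI[of _ L]) auto
qed

end
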